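(* $\widehat{\mathsf{C}^{\mathrm{cof}}_{\boldsymbol{\Sigma}^1_1,\mathbb{N}}}\le_{\mathrm{sW}} \mathsf{wFindHS}_{\boldsymbol{\Pi}^0_1}$.
   Context: Strong Weihrauch reducibility: $f\le_{\mathrm{sW}} g$ iff there are computable $\Phi,\Psi$ on Baire space such that $\Psi\circ G\circ\Phi$ realizes $f$ for every realizer $G$ of $g$. $\mathsf{C}^{\mathrm{cof}}_{\boldsymbol{\Sigma}^1_1,\mathbb{N}}$ is the partial multivalued function which, given a nonempty cofinite $\boldsymbol{\Sigma}^1_1$ subset $A\subseteq\mathbb{N}$ (named by a name of a closed set $C\subseteq\mathbb{N}\times\mathbb{N}^\mathbb{N}$ whose projection to $\mathbb{N}$ is $A$), returns an element of $A$. For a multivalued $f$, its parallelization $\widehat{f}$ maps a sequence $(x_n)_{n\in\mathbb{N}}$ of inputs of $f$ to the set of sequences $(y_n)_n$ with $y_n\in f(x_n)$ for all $n$. The Ramsey space $[\mathbb{N}]^\mathbb{N}$ is the set of strictly increasing functions $\mathbb{N}\to\mathbb{N}$ with Baire-space topology; $fg=f\circ g$. For $P\subseteq[\mathbb{N}]^\mathbb{N}$, $f$ is homogeneous for $P$ if either $fg\in P$ for all $g\in[\mathbb{N}]^\mathbb{N}$ or $fg\notin P$ for all $g$; $\mathrm{HS}(P)$ is the set of homogeneous solutions. Open sets of $[\mathbb{N}]^\mathbb{N}$ are named by enumerations of sets of finite strictly increasing strings whose cones have union the set. $\mathsf{wFindHS}_{\boldsymbol{\Pi}^0_1}$: input an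 open $P$ with $\mathrm{HS}(P)\cap P=\emptyset$, output any element of $\mathrm{HS}(P)\setminus P$. *)

theory Defs
  imports Main "HOL-Library.Nat_Bijection"
begin

datatype recf = Z | S | Id nat | Cn recf "recf list" | Pr recf recf | Mn recf

inductive ev :: "recf \<Rightarrow> nat list \<Rightarrow> nat \<Rightarrow> bool" where
  ev_Z: "ev Z xs 0"
| ev_S: "ev S (x # xs) (Suc x)"
| ev_Id: "i < length xs \<Longrightarrow> ev (Id i) xs (xs ! i)"
| ev_Cn: "list_all2 (\<lambda>g y. ev g xs y) gs ys \<Longrightarrow> ev f ys y \<Longrightarrow> ev (Cn f gs) xs y"
| ev_Pr0: "ev f xs y \<Longrightarrow> ev (Pr f g) (0 # xs) y"
| ev_PrS: "ev (Pr f g) (n # xs) z \<Longrightarrow> ev g (n # z # xs) y \<Longrightarrow> ev (Pr f g) (Suc n # xs) y"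
| ev_Mn: "ev f (y # xs) 0 \<Longrightarrow> (\<forall>k<y. \<exists>v. 0 < v \<and> ev f (k # xs) v) \<Longrightarrow> ev (Mn f) xs y"

definition pref :: "(nat \<Rightarrow> nat) \<Rightarrow> nat \<Rightarrow> nat" where
  "pref p k = list_encode (map p [0..<k])"

text \<open>Phi restricted to D is computable: a total recursive M reads finite prefixes of the
  input; for output position n, the first prefix on which M answers Suc v determines v
  (answer 0 means "not yet").  This is equivalent to Phi|D having a computable
  partial extension (type-2 computability).\<close>
definition computable_on :: "(nat \<Rightarrow> nat) set \<Rightarrow> ((nat \<Rightarrow> nat) \<Rightarrow> (nat \<Rightarrow> nat)) \<Rightarrow> bool" where
  "computable_on D Phi \<longleftrightarrow> (\<exists>M. (\<forall>a b. \<exists>v. ev M [a, b] v) \<and>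
     (\<forall>p\<in>D. \<forall>n. \<exists>k. ev M [pref p k, n] (Suc (Phi p n)) \<and> (\<forall>j<k. ev M [pref p j, n] 0)))"

text \<open>A problem is given on the level of names: a set of admissible input names and a
  relation saying which output names are correct for an input name.\<close>
definition realizes :: "(nat \<Rightarrow> nat) set \<Rightarrow> ((nat \<Rightarrow> nat) \<Rightarrow> (nat \<Rightarrow> nat) \<Rightarrow> bool)
    \<Rightarrow> ((nat \<Rightarrow> nat) \<Rightarrow> (nat \<Rightarrow> nat)) \<Rightarrow> bool" where
  "realizes D sol G \<longleftrightarrow> (\<forall>q\<in>D. sol q (G q))"

definition sW_le :: "(nat \<Rightarrow> nat) set \<Rightarrow> ((nat \<Rightarrow> nat) \<Rightarrow> (nat \<Rightarrow> nat) \<Rightarrow> bool)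
    \<Rightarrow> (nat \<Rightarrow> nat) set \<Rightarrow> ((nat \<Rightarrow> nat) \<Rightarrow> (nat \<Rightarrow> nat) \<Rightarrow> bool) \<Rightarrow> bool" where
  "sW_le domf solf domg solg \<longleftrightarrow> (\<exists>Phi Psi.
     computable_on domf Phi \<and>
     computable_on {G (Phi p) |G p. realizes domg solg G \<and> p \<in> domf} Psi \<and>
     (\<forall>G. realizes domg solg G \<longrightarrow> realizes domf solf (\<lambda>p. Psi (G (Phi p)))))"

definition is_prefix :: "nat list \<Rightarrow> (nat \<Rightarrow> nat) \<Rightarrow> bool" where
  "is_prefix \<sigma> x \<longleftrightarrow> map x [0..<length \<sigma>] = \<sigma>"

text \<open>Closed subsets of N x N^N by negative information: name p enumerates (value 0 = skip,
  value Suc c = basic open set {m} x [\<sigma>] with (m, \<sigma>) = decode c) the complement.\<close>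
definition closed_of :: "(nat \<Rightarrow> nat) \<Rightarrow> (nat \<times> (nat \<Rightarrow> nat)) set" where
  "closed_of p = {(m, x). \<forall>k c. p k = Suc c \<longrightarrow>
       \<not> (fst (prod_decode c) = m \<and> is_prefix (list_decode (snd (prod_decode c))) x)}"

definition sigma11_of :: "(nat \<Rightarrow> nat) \<Rightarrow> nat set" where
  "sigma11_of p = {m. \<exists>x. (m, x) \<in> closed_of p}"

text \<open>Admissible input names of C^cof_{Sigma11,N}: names of closed C whose projection
  A is nonempty and cofinite; solutions are the elements of A.\<close>
definition Ccof_dom :: "(nat \<Rightarrow> nat) set" where
  "Ccof_dom = {p. sigma11_of p \<noteq> {} \<and> finite (- sigma11_of p)}"

text \<open>Parallelization: the input name p encodes the sequence of names
  p_i = (\<lambda>n. p (prod_encode (i, n))); an output sequence of naturals is named by itself.\<close>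
definition component :: "(nat \<Rightarrow> nat) \<Rightarrow> nat \<Rightarrow> (nat \<Rightarrow> nat)" where
  "component p i = (\<lambda>n. p (prod_encode (i, n)))"

definition par_Ccof_dom :: "(nat \<Rightarrow> nat) set" where
  "par_Ccof_dom = {p. \<forall>i. component p i \<in> Ccof_dom}"

definition par_Ccof_sol :: "(nat \<Rightarrow> nat) \<Rightarrow> (nat \<Rightarrow> nat) \<Rightarrow> bool" where
  "par_Ccof_sol p y \<longleftrightarrow> (\<forall>i. y i \<in> sigma11_of (component p i))"

definition ramsey :: "(nat \<Rightarrow> nat) set" where
  "ramsey = {f. strict_mono f}"

definition homogeneous :: "(nat \<Rightarrow> nat) set \<Rightarrow> (nat \<Rightarrow> nat) \<Rightarrow> bool" where
  "homogeneous P f \<longleftrightarrow> (\<forall>g\<in>ramsey. f \<circ> g \<in> P) \<or> (\<forall>g\<in>ramsey. f \<circ> g \<notin> P)"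

definition HS :: "(nat \<Rightarrow> nat) set \<Rightarrow> (nat \<Rightarrow> nat) set" where
  "HS P = {f \<in> ramsey. homogeneous P f}"

text \<open>Open subsets of the Ramsey space: name q enumerates (0 = skip, Suc c = string
  list_decode c) a set of finite strictly increasing strings; the set is the union of cones.\<close>
definition valid_open_name :: "(nat \<Rightarrow> nat) \<Rightarrow> bool" where
  "valid_open_name q \<longleftrightarrow> (\<forall>k c. q k = Suc c \<longrightarrow> sorted_wrt (<) (list_decode c))"

definition open_of :: "(nat \<Rightarrow> nat) \<Rightarrow> (nat \<Rightarrow> nat) set" where
  "open_of q = {f \<in> ramsey. \<exists>k c. q k = Suc c \<and> is_prefix (list_decode c) f}"

text \<open>Elements of the Ramsey space are named by themselves.\<close>
definition wFindHS_dom :: "(nat \<Rightarrow> nat) set" where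
  "wFindHS_dom = {q. valid_open_name q \<and> HS (open_of q) \<inter> open_of q = {}}"

definition wFindHS_sol :: "(nat \<Rightarrow> nat) \<Rightarrow> (nat \<Rightarrow> nat) \<Rightarrow> bool" where
  "wFindHS_sol q f \<longleftrightarrow> f \<in> HS (open_of q) - open_of q"

end

theory Submission
  imports Defs "HOL-Library.Sublist" "HOL-Library.More_List"
begin

text \<open>
  Let \<open>p\<close> name closed sets \<open>C\<^sub>i \<subseteq> \<nat> \<times> \<nat>\<^sup>\<nat>\<close> whose projections \<open>A\<^sub>i\<close> are cofinite. A finite
  increasing string \<open>s\<close> is put into an open set \<open>P\<close> once, for some \<open>i < |s|\<close>, finitely many
  entries of the name of \<open>C\<^sub>i\<close> exclude every point \<open>(s\<^sub>i, x)\<close> with \<open>x\<close> bounded pointwise by the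
  entries of \<open>s\<close> after position \<open>i\<close>. This enumeration is primitive recursive in \<open>p\<close>.

  If \<open>f \<notin> P\<close> then \<open>f i \<in> A\<^sub>i\<close> for every \<open>i\<close>: otherwise no \<open>x\<close> bounded by the tail of \<open>f\<close> has
  \<open>(f i, x) \<in> C\<^sub>i\<close>, so by Koenig's lemma a whole level of the finitely branching tree of bounded
  strings is excluded after finitely many entries, and a prefix of \<open>f\<close> enters \<open>P\<close>. Conversely,
  every \<open>f\<close> has a subsequence outside \<open>P\<close>: one growing so fast that its \<open>i\<close>-th entry lies in
  \<open>A\<^sub>i\<close> and a witness \<open>x\<close> for it is dominated by the later entries. So no element of \<open>P\<close> is
  homogeneous, \<open>P\<close> is a valid instance of \<open>wFindHS\<close>, and every solution, lying outside \<open>P\<close>,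
  solves all the given instances at once.
\<close>

lemma prefix_iff_nth:
  "prefix xs ys \<longleftrightarrow> length xs \<le> length ys \<and> (\<forall>i<length xs. xs ! i = ys ! i)"
proof
  assume "prefix xs ys"
  then show "length xs \<le> length ys \<and> (\<forall>i<length xs. xs ! i = ys ! i)"
    by (auto simp: prefix_def nth_append)
next
  assume "length xs \<le> length ys \<and> (\<forall>i<length xs. xs ! i = ys ! i)"
  then have "take (length xs) ys = xs"
    by (intro nth_equalityI) auto
  then show "prefix xs ys"
    by (metis take_is_prefix)
qed

lemma is_prefix_iff_nth: "is_prefix \<tau> x \<longleftrightarrow> (\<forall>i<length \<tau>. \<tau> ! i = x i)"
  unfolding is_prefix_def list_eq_iff_nth_eq by auto

lemma prefix_map_iff_is_prefix: "length \<tau> \<le> k \<Longrightarrow> prefix \<tau> (map x [0..<k]) \<longleftrightarrow> is_prefix \<tau> x"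
  by (auto simp: prefix_iff_nth is_prefix_iff_nth)

text \<open>An entry \<open>v = Suc c\<close> of a name of a closed set removes the basic open set
  \<open>{fst c} \<times> [list_decode (snd c)]\<close> (see \<^const>\<open>closed_of\<close>); \<open>covers v m \<sigma>\<close> says that this
  set contains \<open>{m} \<times> [\<sigma>]\<close>.\<close>

definition covers :: "nat \<Rightarrow> nat \<Rightarrow> nat list \<Rightarrow> bool" where
  "covers v m \<sigma> \<longleftrightarrow> v \<noteq> 0 \<and> fst (prod_decode (v - 1)) = m \<and>
     prefix (list_decode (snd (prod_decode (v - 1)))) \<sigma>"

definition refutes :: "(nat \<Rightarrow> nat) \<Rightarrow> nat \<Rightarrow> nat list \<Rightarrow> nat \<Rightarrow> bool" where
  "refutes p t s i \<longleftrightarrow> (\<forall>\<sigma>. list_all2 (\<le>) \<sigma> (drop (Suc i) s) \<longrightarrow>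
     (\<exists>e<t. fst (prod_decode e) = i \<and> covers (p e) (s ! i) \<sigma>))"

definition reduction_name :: "(nat \<Rightarrow> nat) \<Rightarrow> nat \<Rightarrow> nat" where
  "reduction_name p n = (let t = fst (prod_decode n); c = snd (prod_decode n); s = list_decode c in
     if sorted_wrt (<) s \<and> (\<exists>i<length s. refutes p t s i) then Suc c else 0)"

lemma reduction_name_eq_Suc_iff:
  "reduction_name p n = Suc c \<longleftrightarrow> c = snd (prod_decode n) \<and> sorted_wrt (<) (list_decode c) \<and>
     (\<exists>i<length (list_decode c). refutes p (fst (prod_decode n)) (list_decode c) i)"
  by (auto simp: reduction_name_def Let_def)

lemma valid_open_name_reduction_name: "valid_open_name (reduction_name p)"
  by (auto simp: valid_open_name_def reduction_name_eq_Suc_iff)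

lemma mem_open_of_reduction_name_iff:
  "f \<in> open_of (reduction_name p) \<longleftrightarrow>
     f \<in> ramsey \<and> (\<exists>t s i. sorted_wrt (<) s \<and> i < length s \<and> refutes p t s i \<and> is_prefix s f)"
proof
  assume "f \<in> open_of (reduction_name p)"
  then obtain n c where "f \<in> ramsey" "reduction_name p n = Suc c" "is_prefix (list_decode c) f"
    by (auto simp: open_of_def)
  then show "f \<in> ramsey \<and> (\<exists>t s i. sorted_wrt (<) s \<and> i < length s \<and> refutes p t s i \<and> is_prefix s f)"
    unfolding reduction_name_eq_Suc_iff by blast
next
  assume "f \<in> ramsey \<and> (\<exists>t s i. sorted_wrt (<) s \<and> i < length s \<and> refutes p t s i \<and> is_prefix s f)"
  then obtain t s i where "f \<in> ramsey" "sorted_wrt (<) s" "i < length s" "refutes p t s i" "is_prefix s f"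
    by blast
  then have "reduction_name p (prod_encode (t, list_encode s)) = Suc (list_encode s)"
    and "is_prefix (list_decode (list_encode s)) f"
    by (auto simp: reduction_name_eq_Suc_iff)
  with \<open>f \<in> ramsey\<close> show "f \<in> open_of (reduction_name p)"
    unfolding open_of_def by blast
qed

lemma mem_closed_of_component_iff:
  "(m, x) \<in> closed_of (component p i) \<longleftrightarrow>
     (\<forall>e k. fst (prod_decode e) = i \<longrightarrow> \<not> covers (p e) m (map x [0..<k]))"
proof -
  have "(\<exists>r c. component p i r = Suc c \<and> fst (prod_decode c) = m \<and>
          is_prefix (list_decode (snd (prod_decode c))) x) \<longleftrightarrow>
        (\<exists>e k. fst (prod_decode e) = i \<and> covers (p e) m (map x [0..<k]))"
  proof
    assume "\<exists>r c. component p i r = Suc c \<and> fst (prod_decode c) = m \<and>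
          is_prefix (list_decode (snd (prod_decode c))) x"
    then obtain r c where "p (prod_encode (i, r)) = Suc c" "fst (prod_decode c) = m"
        "is_prefix (list_decode (snd (prod_decode c))) x"
      by (auto simp: component_def)
    then have "covers (p (prod_encode (i, r))) m (map x [0..<length (list_decode (snd (prod_decode c)))])"
      by (simp add: covers_def prefix_map_iff_is_prefix)
    moreover have "fst (prod_decode (prod_encode (i, r))) = i"
      by simp
    ultimately show "\<exists>e k. fst (prod_decode e) = i \<and> covers (p e) m (map x [0..<k])"
      by blast
  next
    assume "\<exists>e k. fst (prod_decode e) = i \<and> covers (p e) m (map x [0..<k])"
    then obtain e k where e: "fst (prod_decode e) = i" and cov: "covers (p e) m (map x [0..<k])"
      by blast
    define c where "c = p e - 1"
    have "p e = Suc c" and m: "fst (prod_decode c) = m"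
      and pre: "prefix (list_decode (snd (prod_decode c))) (map x [0..<k])"
      using cov by (auto simp: covers_def c_def)
    from pre have "is_prefix (list_decode (snd (prod_decode c))) x"
      using prefix_length_le prefix_map_iff_is_prefix by fastforce
    moreover from e have "p e = component p i (snd (prod_decode e))"
      by (metis component_def prod.collapse prod_decode_inverse)
    ultimately show "\<exists>r c. component p i r = Suc c \<and> fst (prod_decode c) = m \<and>
          is_prefix (list_decode (snd (prod_decode c))) x"
      using \<open>p e = Suc c\<close> m by metis
  qed
  then show ?thesis
    unfolding closed_of_def by blast
qed

lemma covers_take: "covers v m (take k \<sigma>) \<Longrightarrow> covers v m \<sigma>"
  unfolding covers_def using take_is_prefix prefix_order.trans by blast

section \<open>Koenig's lemma for bounded trees\<close>

definition extendable_in :: "(nat list \<Rightarrow> bool) \<Rightarrow> nat list \<Rightarrow> bool" where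
  "extendable_in T \<sigma> \<longleftrightarrow> (\<forall>k. \<exists>\<sigma>'. T \<sigma>' \<and> length \<sigma>' = length \<sigma> + k \<and> take (length \<sigma>) \<sigma>' = \<sigma>)"

lemma extendable_in_snoc:
  assumes take_closed: "\<And>\<sigma> k. T \<sigma> \<Longrightarrow> T (take k \<sigma>)"
    and bounded: "\<And>\<sigma> j. T \<sigma> \<Longrightarrow> j < length \<sigma> \<Longrightarrow> \<sigma> ! j \<le> b j"
    and extendable: "extendable_in T \<sigma>"
  shows "\<exists>v. extendable_in T (\<sigma> @ [v])"
proof (rule ccontr)
  let ?n = "length \<sigma>"
  assume "\<nexists>v. extendable_in T (\<sigma> @ [v])"
  then have "\<forall>v. \<exists>k. \<not> (\<exists>\<sigma>'. T \<sigma>' \<and> length \<sigma>' = Suc ?n + k \<and> take (Suc ?n) \<sigma>' = \<sigma> @ [v])"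
    by (simp add: extendable_in_def)
  from choice[OF this] obtain K
    where K: "\<And>v. \<not> (\<exists>\<sigma>'. T \<sigma>' \<and> length \<sigma>' = Suc ?n + K v \<and> take (Suc ?n) \<sigma>' = \<sigma> @ [v])"
    by blast
  define M where "M = Max (K ` {..b ?n})"
  obtain \<sigma>' where \<sigma>': "T \<sigma>'" "length \<sigma>' = ?n + Suc M" "take ?n \<sigma>' = \<sigma>"
    using extendable unfolding extendable_in_def by blast
  define v where "v = \<sigma>' ! ?n"
  have "v \<le> b ?n"
    unfolding v_def using bounded \<sigma>' by simp
  then have "K v \<le> M"
    unfolding M_def by (intro Max_ge) auto
  have "take (Suc ?n) \<sigma>' = \<sigma> @ [v]"
    using \<sigma>' by (simp add: v_def take_Suc_conv_app_nth)
  then have "T (take (Suc ?n + K v) \<sigma>') \<and> length (take (Suc ?n + K v) \<sigma>') = Suc ?n + K v \<and>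
      take (Suc ?n) (take (Suc ?n + K v) \<sigma>') = \<sigma> @ [v]"
    using \<sigma>' \<open>K v \<le> M\<close> take_closed by simp
  with K show False
    by blast
qed

theorem bounded_tree_has_path:
  fixes T :: "nat list \<Rightarrow> bool"
  assumes take_closed: "\<And>\<sigma> k. T \<sigma> \<Longrightarrow> T (take k \<sigma>)"
    and bounded: "\<And>\<sigma> j. T \<sigma> \<Longrightarrow> j < length \<sigma> \<Longrightarrow> \<sigma> ! j \<le> b j"
    and unbounded_height: "\<And>k. \<exists>\<sigma>. T \<sigma> \<and> length \<sigma> = k"
  shows "\<exists>x. \<forall>k. T (map x [0..<k])"
proof -
  define path where "path n = rec_nat [] (\<lambda>_ \<sigma>. \<sigma> @ [SOME v. extendable_in T (\<sigma> @ [v])]) n" for n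
  have path_Suc: "path (Suc n) = path n @ [SOME v. extendable_in T (path n @ [v])]" for n
    by (simp add: path_def)
  have extendable: "extendable_in T (path n)" for n
  proof (induction n)
    case 0
    show ?case using unbounded_height by (simp add: path_def extendable_in_def)
  next
    case (Suc n)
    then obtain v where "extendable_in T (path n @ [v])"
      using extendable_in_snoc[where T = T and b = b, OF take_closed bounded] by blast
    then show ?case
      unfolding path_Suc by (rule someI[where P = "\<lambda>v. extendable_in T (path n @ [v])"])
  qed
  define x where "x j = path (Suc j) ! j" for j
  have "path n = map x [0..<n]" for n
  proof (induction n)
    case (Suc n)
    moreover have "length (path n) = n"
      by (induction n) (simp_all add: path_def)
    ultimately show ?case
      by (simp add: x_def path_Suc nth_append)
  qed (simp add: path_def)
  moreover have "T \<sigma>" if "extendable_in T \<sigma>" for \<sigma>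
  proof -
    from that obtain \<sigma>' where "T \<sigma>'" "length \<sigma>' = length \<sigma> + 0" "take (length \<sigma>) \<sigma>' = \<sigma>"
      unfolding extendable_in_def by blast
    then show ?thesis by simp
  qed
  ultimately show ?thesis
    using extendable by metis
qed

lemma covering_level_of_not_mem:
  assumes "m \<notin> sigma11_of (component p i)"
  shows "\<exists>k. \<forall>\<sigma>. list_all2 (\<le>) \<sigma> (map b [0..<k]) \<longrightarrow> (\<exists>e. fst (prod_decode e) = i \<and> covers (p e) m \<sigma>)"
proof (rule ccontr)
  define T where "T \<sigma> \<longleftrightarrow> list_all2 (\<le>) \<sigma> (map b [0..<length \<sigma>]) \<and>
    \<not> (\<exists>e. fst (prod_decode e) = i \<and> covers (p e) m \<sigma>)" for \<sigma>
  assume none: "\<not> ?thesis"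
  have "\<exists>\<sigma>. T \<sigma> \<and> length \<sigma> = k" for k
  proof -
    from none obtain \<sigma> where "list_all2 (\<le>) \<sigma> (map b [0..<k])"
      and "\<not> (\<exists>e. fst (prod_decode e) = i \<and> covers (p e) m \<sigma>)"
      by blast
    moreover from this(1) have "length \<sigma> = k"
      by (simp add: list_all2_lengthD)
    ultimately show ?thesis
      unfolding T_def by blast
  qed
  moreover have "T (take k \<sigma>)" if "T \<sigma>" for \<sigma> k
  proof -
    have "list_all2 (\<le>) (take k \<sigma>) (map b [0..<length (take k \<sigma>)])"
      using that by (auto simp: T_def list_all2_conv_all_nth)
    with that show ?thesis
      unfolding T_def by (blast dest: covers_take)
  qed
  moreover have "\<sigma> ! j \<le> b j" if "T \<sigma>" "j < length \<sigma>" for \<sigma> j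
    using that by (auto simp: T_def list_all2_conv_all_nth)
  ultimately obtain x where "\<forall>k. T (map x [0..<k])"
    using bounded_tree_has_path[of T b] by blast
  then have "(m, x) \<in> closed_of (component p i)"
    by (simp add: T_def mem_closed_of_component_iff)
  with assms show False
    by (auto simp: sigma11_of_def)
qed

lemma finite_list_all2_le: "finite {\<sigma>. list_all2 (\<le>) \<sigma> (\<beta> :: nat list)}"
proof (induction \<beta>)
  case (Cons b \<beta>)
  have "{\<sigma>. list_all2 (\<le>) \<sigma> (b # \<beta>)} = (\<lambda>(y, \<sigma>). y # \<sigma>) ` ({..b} \<times> {\<sigma>. list_all2 (\<le>) \<sigma> \<beta>})"
    by (auto simp: list_all2_Cons2)
  with Cons show ?case
    by simp
qed simp

lemma finite_witnesses_bounded: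
  fixes P :: "'a \<Rightarrow> nat \<Rightarrow> bool"
  assumes "finite X" and "\<forall>\<sigma>\<in>X. \<exists>e. P \<sigma> e"
  shows "\<exists>t. \<forall>\<sigma>\<in>X. \<exists>e<t. P \<sigma> e"
proof -
  obtain g where g: "\<forall>\<sigma>\<in>X. P \<sigma> (g \<sigma>)"
    using bchoice[OF assms(2)] by blast
  obtain t where "\<forall>e\<in>g ` X. e < t"
    using finite_nat_set_iff_bounded finite_imageI[OF assms(1)] by blast
  with g show ?thesis
    by blast
qed

lemma refutation_of_not_mem:
  assumes "m \<notin> sigma11_of (component p i)"
  shows "\<exists>k t. \<forall>\<sigma>. list_all2 (\<le>) \<sigma> (map b [0..<k]) \<longrightarrow>
    (\<exists>e<t. fst (prod_decode e) = i \<and> covers (p e) m \<sigma>)"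
proof -
  obtain k where "\<forall>\<sigma>\<in>{\<sigma>. list_all2 (\<le>) \<sigma> (map b [0..<k])}. \<exists>e. fst (prod_decode e) = i \<and> covers (p e) m \<sigma>"
    using covering_level_of_not_mem[OF assms, of b] by auto
  from finite_witnesses_bounded[OF finite_list_all2_le this] show ?thesis
    by auto
qed

lemma mem_open_of_reduction_name:
  assumes f: "f \<in> ramsey" and not_mem: "f i \<notin> sigma11_of (component p i)"
  shows "f \<in> open_of (reduction_name p)"
proof -
  obtain k t where kt: "\<forall>\<sigma>. list_all2 (\<le>) \<sigma> (map (\<lambda>j. f (Suc i + j)) [0..<k]) \<longrightarrow>
      (\<exists>e<t. fst (prod_decode e) = i \<and> covers (p e) (f i) \<sigma>)"
    using refutation_of_not_mem[OF not_mem] by blast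
  define s where "s = map f [0..<Suc i + k]"
  have "sorted_wrt (<) s"
    using f by (simp add: s_def ramsey_def sorted_wrt_iff_nth_less strict_mono_less del: upt_Suc)
  moreover have "i < length s" "is_prefix s f"
    by (simp_all add: s_def is_prefix_def del: upt_Suc)
  moreover have "refutes p t s i"
  proof -
    have tail: "drop (Suc i) s = map (\<lambda>j. f (Suc i + j)) [0..<k]"
      by (rule nth_equalityI) (simp_all add: s_def del: upt_Suc)
    have "s ! i = f i"
      by (simp add: s_def del: upt_Suc)
    with kt show ?thesis
      unfolding refutes_def tail by simp
  qed
  ultimately show ?thesis
    using f unfolding mem_open_of_reduction_name_iff by blast
qed

lemma par_Ccof_sol_if_not_mem_open:
  "f \<in> ramsey \<Longrightarrow> f \<notin> open_of (reduction_name p) \<Longrightarrow> par_Ccof_sol p f"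
  unfolding par_Ccof_sol_def using mem_open_of_reduction_name by blast

lemma not_mem_open_of_reduction_name:
  assumes closed: "\<And>i. (h i, x i) \<in> closed_of (component p i)"
    and dominated: "\<And>i j. x i j \<le> h (Suc i + j)"
  shows "h \<notin> open_of (reduction_name p)"
proof
  assume "h \<in> open_of (reduction_name p)"
  then obtain t s i where i: "i < length s" and "refutes p t s i" and "is_prefix s h"
    unfolding mem_open_of_reduction_name_iff by blast
  have s: "s ! n = h n" if "n < length s" for n
  proof -
    have "s ! n = map h [0..<length s] ! n"
      using \<open>is_prefix s h\<close> by (simp add: is_prefix_def)
    with that show ?thesis
      by simp
  qed
  let ?\<sigma> = "map (x i) [0..<length s - Suc i]"
  have "list_all2 (\<le>) ?\<sigma> (drop (Suc i) s)"
  proof (rule list_all2_all_nthI)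
    fix j
    assume "j < length ?\<sigma>"
    then have "?\<sigma> ! j = x i j" and "drop (Suc i) s ! j = h (Suc i + j)"
      by (simp_all add: s)
    then show "?\<sigma> ! j \<le> drop (Suc i) s ! j"
      using dominated by simp
  qed simp
  with \<open>refutes p t s i\<close> obtain e where "fst (prod_decode e) = i" "covers (p e) (s ! i) ?\<sigma>"
    unfolding refutes_def by blast
  moreover have "s ! i = h i"
    using i by (rule s)
  ultimately show False
    using closed[of i] by (auto simp: mem_closed_of_component_iff)
qed

lemma strict_mono_subseq_growing:
  fixes f :: "nat \<Rightarrow> nat"
  assumes "strict_mono f"
  shows "\<exists>g. strict_mono g \<and> (\<forall>n. N n \<le> f (g n)) \<and> (\<forall>n. B n (f (g n)) \<le> f (g (Suc n)))"
proof -
  define g where "g = rec_nat (N 0) (\<lambda>n gn. Suc gn + N (Suc n) + B n (f gn))"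
  have g_Suc: "g (Suc n) = Suc (g n) + N (Suc n) + B n (f (g n))" for n
    by (simp add: g_def)
  have f_ge: "z \<le> f z" for z
    using assms by (rule strict_mono_imp_increasing)
  have "strict_mono g"
    unfolding strict_mono_Suc_iff g_Suc by simp
  moreover have "N n \<le> f (g n)" for n
    using f_ge[of "g n"] by (cases n) (simp_all add: g_def)
  moreover have "B n (f (g n)) \<le> f (g (Suc n))" for n
    using f_ge[of "g (Suc n)"] g_Suc[of n] by simp
  ultimately show ?thesis
    by blast
qed

lemma strict_mono_subseq_dominating:
  fixes f :: "nat \<Rightarrow> nat" and W :: "nat \<Rightarrow> nat \<Rightarrow> nat \<Rightarrow> nat"
  assumes "strict_mono f"
  shows "\<exists>g. strict_mono g \<and> (\<forall>n. N n \<le> f (g n)) \<and> (\<forall>i j. W i (f (g i)) j \<le> f (g (Suc i + j)))"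
proof -
  define B where "B n v = Max ((\<lambda>(l, m). W l m (n - l)) ` ({..n} \<times> {..v}))" for n v
  obtain g where g: "strict_mono g" "\<And>n. N n \<le> f (g n)" "\<And>n. B n (f (g n)) \<le> f (g (Suc n))"
    using strict_mono_subseq_growing[OF assms, of N B] by blast
  have "W i (f (g i)) j \<le> f (g (Suc i + j))" for i j
  proof -
    have "f (g i) \<le> f (g (i + j))"
      using assms g(1) by (simp add: strict_mono_less_eq)
    then have "W i (f (g i)) j \<in> (\<lambda>(l, m). W l m (i + j - l)) ` ({..i + j} \<times> {..f (g (i + j))})"
      by (intro rev_image_eqI[of "(i, f (g i))"]) simp_all
    then have "W i (f (g i)) j \<le> B (i + j) (f (g (i + j)))"
      unfolding B_def by (intro Max_ge) simp_all
    also have "\<dots> \<le> f (g (Suc i + j))"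
      using g(3) by simp
    finally show ?thesis .
  qed
  with g show ?thesis
    by blast
qed

lemma exists_subseq_not_mem_open:
  assumes p: "p \<in> par_Ccof_dom" and f: "f \<in> ramsey"
  shows "\<exists>g\<in>ramsey. f \<circ> g \<notin> open_of (reduction_name p)"
proof -
  let ?A = "\<lambda>l. sigma11_of (component p l)"
  have "\<forall>l. \<exists>N. \<forall>m\<ge>N. m \<in> ?A l"
    using p unfolding par_Ccof_dom_def Ccof_dom_def
    by (simp add: eventually_cofinite flip: eventually_sequentially cofinite_eq_sequentially Compl_eq)
  then obtain N where N: "\<And>l m. N l \<le> m \<Longrightarrow> m \<in> ?A l"
    by metis
  have "\<forall>l m. \<exists>x. m \<in> ?A l \<longrightarrow> (m, x) \<in> closed_of (component p l)"
    by (simp add: sigma11_of_def)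
  then obtain wit where wit: "\<And>l m. m \<in> ?A l \<Longrightarrow> (m, wit l m) \<in> closed_of (component p l)"
    by metis
  obtain g where g: "strict_mono g" "\<And>n. N n \<le> f (g n)"
    and dominated: "\<And>i j. wit i (f (g i)) j \<le> f (g (Suc i + j))"
    using f strict_mono_subseq_dominating[of f N wit] by (auto simp: ramsey_def)
  have "f \<circ> g \<notin> open_of (reduction_name p)"
    using wit[OF N[OF g(2)]] dominated by (intro not_mem_open_of_reduction_name) auto
  moreover have "g \<in> ramsey"
    using g(1) by (simp add: ramsey_def)
  ultimately show ?thesis
    by blast
qed

lemma HS_disjoint_if_avoidable:
  assumes "\<And>f. f \<in> ramsey \<Longrightarrow> \<exists>g\<in>ramsey. f \<circ> g \<notin> P"
  shows "HS P \<inter> P = {}"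
proof -
  have "id \<in> ramsey"
    by (simp add: ramsey_def strict_mono_def)
  then have "f \<notin> P" if "f \<in> ramsey" "homogeneous P f" for f
    using that assms[of f] unfolding homogeneous_def by (metis comp_id)
  then show ?thesis
    by (auto simp: HS_def)
qed

lemma reduction_name_mem_wFindHS_dom: "p \<in> par_Ccof_dom \<Longrightarrow> reduction_name p \<in> wFindHS_dom"
  unfolding wFindHS_dom_def
  using valid_open_name_reduction_name HS_disjoint_if_avoidable exists_subseq_not_mem_open by blast

section \<open>Total recursive functions\<close>

definition total_recursive :: "nat \<Rightarrow> (nat list \<Rightarrow> nat) \<Rightarrow> bool" where
  "total_recursive n F \<longleftrightarrow> (\<exists>M. \<forall>xs. length xs = n \<longrightarrow> ev M xs (F xs))"

lemma total_recursive_cong: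
  "total_recursive n F \<Longrightarrow> (\<And>xs. length xs = n \<Longrightarrow> F xs = G xs) \<Longrightarrow> total_recursive n G"
  unfolding total_recursive_def by metis

lemma total_recursive_proj: "i < n \<Longrightarrow> total_recursive n (\<lambda>xs. xs ! i)"
  unfolding total_recursive_def by (auto intro: ev_Id)

lemma total_recursive_programs:
  assumes "\<forall>G\<in>set Gs. total_recursive n G"
  shows "\<exists>Ms. list_all2 (\<lambda>G M. \<forall>xs. length xs = n \<longrightarrow> ev M xs (G xs)) Gs Ms"
  using assms
proof (induction Gs)
  case (Cons G Gs)
  then obtain Ms M where "list_all2 (\<lambda>G M. \<forall>xs. length xs = n \<longrightarrow> ev M xs (G xs)) Gs Ms"
    and "\<forall>xs. length xs = n \<longrightarrow> ev M xs (G xs)"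
    by (auto simp: total_recursive_def)
  then show ?case by (intro exI[of _ "M # Ms"]) auto
qed (intro exI[of _ "[]"], simp)

lemma total_recursive_comp:
  assumes "total_recursive (length Gs) F" and "\<forall>G\<in>set Gs. total_recursive n G"
  shows "total_recursive n (\<lambda>xs. F (map (\<lambda>G. G xs) Gs))"
proof -
  obtain MF where MF: "\<forall>ys. length ys = length Gs \<longrightarrow> ev MF ys (F ys)"
    using assms(1) by (auto simp: total_recursive_def)
  obtain Ms where Ms: "list_all2 (\<lambda>G M. \<forall>xs. length xs = n \<longrightarrow> ev M xs (G xs)) Gs Ms"
    using total_recursive_programs[OF assms(2)] by blast
  have "ev (Cn MF Ms) xs (F (map (\<lambda>G. G xs) Gs))" if "length xs = n" for xs
  proof (rule ev_Cn)
    show "list_all2 (\<lambda>g y. ev g xs y) Ms (map (\<lambda>G. G xs) Gs)"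
      using Ms that by (induction Gs Ms rule: list_all2_induct) auto
  qed (use MF in simp)
  then show ?thesis unfolding total_recursive_def by blast
qed

lemma total_recursive_Suc:
  assumes "total_recursive n F"
  shows "total_recursive n (\<lambda>xs. Suc (F xs))"
proof -
  have "total_recursive (length [F]) (\<lambda>ys. Suc (hd ys))"
    unfolding total_recursive_def by (intro exI[of _ S]) (auto simp: length_Suc_conv intro: ev_S)
  from total_recursive_comp[OF this, of n] assms show ?thesis
    by simp
qed

lemma total_recursive_const: "total_recursive n (\<lambda>_. c)"
proof (induction c)
  case 0
  show ?case unfolding total_recursive_def by (auto intro: ev_Z)
qed (rule total_recursive_Suc)

lemma ev_Pr_rec_nat:
  assumes "\<forall>xs. length xs = n \<longrightarrow> ev f xs (B xs)"
    and "\<forall>ys. length ys = Suc (Suc n) \<longrightarrow> ev g ys (St ys)"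
    and "length xs = n"
  shows "ev (Pr f g) (i # xs) (rec_nat (B xs) (\<lambda>i acc. St (i # acc # xs)) i)"
  using assms by (induction i) (auto intro: ev_Pr0 ev_PrS)

lemma total_recursive_rec_nat:
  assumes "total_recursive n N" "total_recursive n B" "total_recursive (Suc (Suc n)) St"
  shows "total_recursive n (\<lambda>xs. rec_nat (B xs) (\<lambda>i acc. St (i # acc # xs)) (N xs))"
proof -
  obtain f g where "\<forall>xs. length xs = n \<longrightarrow> ev f xs (B xs)"
    and "\<forall>ys. length ys = Suc (Suc n) \<longrightarrow> ev g ys (St ys)"
    using assms(2,3) by (auto simp: total_recursive_def)
  then have "ev (Pr f g) ys (rec_nat (B (tl ys)) (\<lambda>i acc. St (i # acc # tl ys)) (hd ys))"
    if "length ys = Suc n" for ys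
    using that by (cases ys) (auto intro: ev_Pr_rec_nat)
  then have "total_recursive (Suc n) (\<lambda>ys. rec_nat (B (tl ys)) (\<lambda>i acc. St (i # acc # tl ys)) (hd ys))"
    unfolding total_recursive_def by blast
  then have "total_recursive n (\<lambda>xs. (\<lambda>ys. rec_nat (B (tl ys)) (\<lambda>i acc. St (i # acc # tl ys)) (hd ys))
      (map (\<lambda>G. G xs) (N # map (\<lambda>j ys. ys ! j) [0..<n])))"
    using assms(1) by (intro total_recursive_comp) (auto intro: total_recursive_proj)
  moreover have "map ((!) xs) [0..<n] = xs" if "length xs = n" for xs :: "nat list"
    using that map_nth by blast
  ultimately show ?thesis
    by (elim total_recursive_cong) (simp add: comp_def)
qed

lemma total_recursive_add:
  assumes "total_recursive n F" "total_recursive n G"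
  shows "total_recursive n (\<lambda>xs. F xs + G xs)"
proof -
  have "rec_nat y (\<lambda>_ acc. Suc acc) x = x + y" for x y :: nat
    by (induction x) auto
  moreover have "total_recursive n (\<lambda>xs. rec_nat (G xs) (\<lambda>i acc. Suc ((i # acc # xs) ! 1)) (F xs))"
    using assms by (intro total_recursive_rec_nat total_recursive_Suc total_recursive_proj) auto
  ultimately show ?thesis by simp
qed

lemma total_recursive_diff:
  assumes "total_recursive n F" "total_recursive n G"
  shows "total_recursive n (\<lambda>xs. F xs - G xs)"
proof -
  have pred: "total_recursive (Suc (Suc n)) (\<lambda>ys. ys ! 1 - 1)"
  proof -
    have "rec_nat 0 (\<lambda>i _. i) x = x - 1" for x :: nat
      by (cases x) auto
    moreover have "total_recursive (Suc (Suc n))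
        (\<lambda>ys. rec_nat 0 (\<lambda>i acc. (i # acc # ys) ! 0) (ys ! 1))"
      by (intro total_recursive_rec_nat total_recursive_const total_recursive_proj) auto
    ultimately show ?thesis by simp
  qed
  have "rec_nat x (\<lambda>_ acc. acc - 1) y = x - y" for x y :: nat
    by (induction y) auto
  moreover have "total_recursive n (\<lambda>xs. rec_nat (F xs) (\<lambda>i acc. (i # acc # xs) ! 1 - 1) (G xs))"
    using assms pred by (intro total_recursive_rec_nat) auto
  ultimately show ?thesis by simp
qed

lemma total_recursive_if:
  assumes "total_recursive n C" "total_recursive n F" "total_recursive n G"
  shows "total_recursive n (\<lambda>xs. if C xs \<noteq> 0 then F xs else G xs)"
proof -
  have "rec_nat z (\<lambda>_ _. y) x = (if x \<noteq> 0 then y else z)" for x y z :: nat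
    by (cases x) auto
  moreover have "total_recursive 3 (\<lambda>ys. rec_nat (ys ! 2) (\<lambda>i acc. (i # acc # ys) ! 3) (ys ! 0))"
    by (intro total_recursive_rec_nat total_recursive_proj) auto
  ultimately have "total_recursive (length [C, F, G]) (\<lambda>ys. if ys ! 0 \<noteq> 0 then ys ! 1 else ys ! 2)"
    by (auto elim!: total_recursive_cong simp: numeral_3_eq_3)
  from total_recursive_comp[OF this, of n] assms show ?thesis
    by (simp add: numeral_2_eq_2 cong: if_cong)
qed

lemma total_recursive_if_less:
  assumes "total_recursive n A" "total_recursive n B" "total_recursive n F" "total_recursive n G"
  shows "total_recursive n (\<lambda>xs. if A xs < B xs then F xs else G xs)"
proof -
  have "total_recursive n (\<lambda>xs. if B xs - A xs \<noteq> 0 then F xs else G xs)"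
    using assms by (intro total_recursive_if total_recursive_diff)
  then show ?thesis by (rule total_recursive_cong) auto
qed

lemma total_recursive_shift:
  assumes "total_recursive (Suc n) P"
  shows "total_recursive (Suc (Suc n)) (\<lambda>ys. P (hd ys # drop 2 ys))"
proof -
  let ?Gs = "(\<lambda>ys. ys ! 0) # map (\<lambda>j ys. ys ! Suc (Suc j)) [0..<n]"
  have "total_recursive (Suc (Suc n)) (\<lambda>ys. P (map (\<lambda>G. G ys) ?Gs))"
    using assms by (intro total_recursive_comp) (auto intro: total_recursive_proj)
  then show ?thesis
    by (rule total_recursive_cong)
      (auto simp: length_Suc_conv comp_def map_nth)
qed

definition bounded_least :: "nat \<Rightarrow> (nat \<Rightarrow> bool) \<Rightarrow> nat" where
  "bounded_least N Q = (if \<exists>i<N. Q i then LEAST i. Q i else N)"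

lemma bounded_least_less_iff: "bounded_least N Q < N \<longleftrightarrow> (\<exists>i<N. Q i)"
  unfolding bounded_least_def by (auto intro: Least_le le_less_trans)

lemma bounded_least_rec_nat:
  "rec_nat 0 (\<lambda>i acc. if acc < i then acc else if Q i then i else Suc i) N = bounded_least N Q"
proof (induction N)
  case (Suc N)
  show ?case
  proof (cases "\<exists>i<N. Q i")
    case True
    then show ?thesis using Suc bounded_least_less_iff[of N Q]
      by (auto simp: bounded_least_def less_Suc_eq)
  next
    case False
    then have "Q N \<Longrightarrow> (LEAST i. Q i) = N"
      by (intro Least_equality) (auto simp: not_less[symmetric])
    with False show ?thesis using Suc by (auto simp: bounded_least_def less_Suc_eq)
  qed
qed (simp add: bounded_least_def)

lemma total_recursive_bounded_least:
  assumes "total_recursive n N" "total_recursive (Suc n) P"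
  shows "total_recursive n (\<lambda>xs. bounded_least (N xs) (\<lambda>i. P (i # xs) \<noteq> 0))"
proof -
  note shifted = total_recursive_shift[OF assms(2)]
  have "total_recursive (Suc (Suc n)) (\<lambda>ys. if ys ! 1 < ys ! 0 then ys ! 1
      else if P (hd ys # drop 2 ys) \<noteq> 0 then ys ! 0 else Suc (ys ! 0))"
    by (intro total_recursive_if_less total_recursive_if total_recursive_proj
        total_recursive_Suc shifted) auto
  from total_recursive_rec_nat[OF assms(1) total_recursive_const this]
  have "total_recursive n (\<lambda>xs. rec_nat 0 (\<lambda>i acc. if acc < i then acc
      else if P (i # xs) \<noteq> 0 then i else Suc i) (N xs))"
    by (simp add: numeral_2_eq_2 cong: if_cong)
  then show ?thesis by (simp only: bounded_least_rec_nat)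
qed

section \<open>Primitive recursive expressions\<close>

text \<open>Variables are de Bruijn indices into the argument list; \<open>Rec\<close> and \<open>BMin\<close>
  bind the counter (and the accumulator), and \<open>App\<close> feeds the values of its arguments to
  an expression with its own variables.\<close>

datatype pexp = Var nat | Cst nat | Plus pexp pexp | Minus pexp pexp | Cond pexp pexp pexp
  | Rec pexp pexp pexp | BMin pexp pexp | App pexp "pexp list"

primrec peval :: "pexp \<Rightarrow> nat list \<Rightarrow> nat" where
  "peval (Var i) xs = xs ! i"
| "peval (Cst c) xs = c"
| "peval (Plus a b) xs = peval a xs + peval b xs"
| "peval (Minus a b) xs = peval a xs - peval b xs"
| "peval (Cond c a b) xs = (if peval c xs \<noteq> 0 then peval a xs else peval b xs)"
| "peval (Rec N b s) xs = rec_nat (peval b xs) (\<lambda>i acc. peval s (i # acc # xs)) (peval N xs)"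
| "peval (BMin N P) xs = bounded_least (peval N xs) (\<lambda>i. peval P (i # xs) \<noteq> 0)"
| "peval (App f as) xs = peval f (map (\<lambda>a. peval a xs) as)"

fun wf_pexp :: "nat \<Rightarrow> pexp \<Rightarrow> bool" where
  "wf_pexp n (Var i) \<longleftrightarrow> i < n"
| "wf_pexp n (Cst c) \<longleftrightarrow> True"
| "wf_pexp n (Plus a b) \<longleftrightarrow> wf_pexp n a \<and> wf_pexp n b"
| "wf_pexp n (Minus a b) \<longleftrightarrow> wf_pexp n a \<and> wf_pexp n b"
| "wf_pexp n (Cond c a b) \<longleftrightarrow> wf_pexp n c \<and> wf_pexp n a \<and> wf_pexp n b"
| "wf_pexp n (Rec N b s) \<longleftrightarrow> wf_pexp n N \<and> wf_pexp n b \<and> wf_pexp (Suc (Suc n)) s"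
| "wf_pexp n (BMin N P) \<longleftrightarrow> wf_pexp n N \<and> wf_pexp (Suc n) P"
| "wf_pexp n (App f as) \<longleftrightarrow> wf_pexp (length as) f \<and> (\<forall>a\<in>set as. wf_pexp n a)"

theorem total_recursive_peval: "wf_pexp n e \<Longrightarrow> total_recursive n (peval e)"
proof (induction e arbitrary: n)
  case (Var i)
  then show ?case by (simp add: total_recursive_proj)
next
  case (Cst c)
  then show ?case by (simp add: total_recursive_const)
next
  case (Plus a b)
  then show ?case by (simp add: total_recursive_add)
next
  case (Minus a b)
  then show ?case by (simp add: total_recursive_diff)
next
  case (Cond c a b)
  then show ?case using total_recursive_if[of n "peval c" "peval a" "peval b"] by simp
next
  case (Rec N b s)
  then show ?case using total_recursive_rec_nat[of n "peval N" "peval b" "peval s"] by simp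
next
  case (BMin N P)
  then show ?case using total_recursive_bounded_least[of n "peval N" "peval P"] by simp
next
  case (App f as)
  then show ?case using total_recursive_comp[of "map peval as" "peval f" n] by (simp add: comp_def)
qed

definition holds :: "pexp \<Rightarrow> nat list \<Rightarrow> bool" where
  "holds e xs \<longleftrightarrow> peval e xs \<noteq> 0"

lemma peval_Cond_holds [simp]:
  "peval (Cond c a b) xs = (if holds c xs then peval a xs else peval b xs)"
  by (simp add: holds_def)

lemma peval_BMin_holds [simp]:
  "peval (BMin N P) xs = bounded_least (peval N xs) (\<lambda>i. holds P (i # xs))"
  by (simp add: holds_def)

declare peval.simps(5,7) [simp del]

lemma holds_App [simp]: "holds (App f as) xs \<longleftrightarrow> holds f (map (\<lambda>a. peval a xs) as)"
  by (simp add: holds_def)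

definition "SucE a = Plus a (Cst 1)"
definition "NotE a = Cond a (Cst 0) (Cst 1)"
definition "AndE a b = Cond a (Cond b (Cst 1) (Cst 0)) (Cst 0)"
definition "ImpE a b = Cond a (Cond b (Cst 1) (Cst 0)) (Cst 1)"
definition "LessE a b = Cond (Minus b a) (Cst 1) (Cst 0)"
definition "LeE a b = NotE (LessE b a)"
definition "EqE a b = AndE (LeE a b) (LeE b a)"
definition "BexE N P = LessE (BMin N P) N"
definition "BallE N P = NotE (BexE N (NotE P))"

lemmas connective_defs = SucE_def NotE_def AndE_def ImpE_def LessE_def LeE_def EqE_def BexE_def BallE_def

lemma peval_SucE [simp]: "peval (SucE a) xs = Suc (peval a xs)"
  by (simp add: SucE_def)

lemma holds_connectives [simp]:
  "holds (NotE a) xs \<longleftrightarrow> \<not> holds a xs"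
  "holds (AndE a b) xs \<longleftrightarrow> holds a xs \<and> holds b xs"
  "holds (ImpE a b) xs \<longleftrightarrow> (holds a xs \<longrightarrow> holds b xs)"
  "holds (LessE a b) xs \<longleftrightarrow> peval a xs < peval b xs"
  "holds (LeE a b) xs \<longleftrightarrow> peval a xs \<le> peval b xs"
  "holds (EqE a b) xs \<longleftrightarrow> peval a xs = peval b xs"
  by (auto simp: connective_defs holds_def)

lemma holds_BexE [simp]: "holds (BexE N P) xs \<longleftrightarrow> (\<exists>i<peval N xs. holds P (i # xs))"
  by (simp only: BexE_def holds_connectives peval_BMin_holds bounded_least_less_iff)

lemma holds_BallE [simp]: "holds (BallE N P) xs \<longleftrightarrow> (\<forall>i<peval N xs. holds P (i # xs))"
  by (simp add: BallE_def)

lemma wf_pexp_connectives [simp]: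
  "wf_pexp n (SucE a) \<longleftrightarrow> wf_pexp n a"
  "wf_pexp n (NotE a) \<longleftrightarrow> wf_pexp n a"
  "wf_pexp n (AndE a b) \<longleftrightarrow> wf_pexp n a \<and> wf_pexp n b"
  "wf_pexp n (ImpE a b) \<longleftrightarrow> wf_pexp n a \<and> wf_pexp n b"
  "wf_pexp n (LessE a b) \<longleftrightarrow> wf_pexp n a \<and> wf_pexp n b"
  "wf_pexp n (LeE a b) \<longleftrightarrow> wf_pexp n a \<and> wf_pexp n b"
  "wf_pexp n (EqE a b) \<longleftrightarrow> wf_pexp n a \<and> wf_pexp n b"
  "wf_pexp n (BexE N P) \<longleftrightarrow> wf_pexp n N \<and> wf_pexp (Suc n) P"
  "wf_pexp n (BallE N P) \<longleftrightarrow> wf_pexp n N \<and> wf_pexp (Suc n) P"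
  by (auto simp: connective_defs)

definition "TriangleE a = App (Rec (Var 0) (Cst 0) (Plus (Var 1) (SucE (Var 0)))) [a]"
definition "DiagonalE a = App (BMin (SucE (Var 0)) (LessE (Var 1) (TriangleE (SucE (Var 0))))) [a]"
definition "FstDecodeE a = App (Minus (Var 0) (TriangleE (DiagonalE (Var 0)))) [a]"
definition "SndDecodeE a = App (Minus (DiagonalE (Var 0)) (FstDecodeE (Var 0))) [a]"

lemma peval_TriangleE [simp]: "peval (TriangleE a) xs = triangle (peval a xs)"
proof -
  have "rec_nat 0 (\<lambda>i acc. acc + Suc i) x = triangle x" for x
    by (induction x) auto
  then show ?thesis by (simp add: TriangleE_def)
qed

lemma prod_decode_diagonal:
  fixes c :: nat
  defines "k \<equiv> LEAST k. c < triangle (Suc k)"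
  shows "prod_decode c = (c - triangle k, k - (c - triangle k))"
    and "k = bounded_least (Suc c) (\<lambda>k. c < triangle (Suc k))"
proof -
  have ex: "c < triangle (Suc c)" by (induction c) auto
  have upper: "c < triangle k + Suc k" using LeastI[of "\<lambda>k. c < triangle (Suc k)", OF ex] by (simp add: k_def)
  have lower: "triangle k \<le> c"
  proof (cases k)
    case (Suc k')
    then have "\<not> c < triangle (Suc k')"
      unfolding k_def by (intro not_less_Least) (simp add: k_def)
    then show ?thesis using Suc by simp
  qed simp
  have "prod_encode (c - triangle k, k - (c - triangle k)) = c"
    using upper lower by (simp add: prod_encode_def)
  then show "prod_decode c = (c - triangle k, k - (c - triangle k))"
    by (metis prod_encode_inverse)
  show "k = bounded_least (Suc c) (\<lambda>k. c < triangle (Suc k))"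
    using ex Least_le[of "\<lambda>k. c < triangle (Suc k)" c]
    by (auto simp: bounded_least_def k_def)
qed

lemma peval_prod_decode [simp]:
  "peval (FstDecodeE a) xs = fst (prod_decode (peval a xs))"
  "peval (SndDecodeE a) xs = snd (prod_decode (peval a xs))"
  using prod_decode_diagonal[of "peval a xs"]
  by (simp_all add: FstDecodeE_def SndDecodeE_def DiagonalE_def)

definition "HdE a = FstDecodeE (Minus a (Cst 1))"
definition "TlE a = SndDecodeE (Minus a (Cst 1))"
definition "DropE l i = App (Rec (Var 1) (Var 0) (TlE (Var 1))) [l, i]"
definition "NthE l i = HdE (DropE l i)"
definition "LengthE l = App (BMin (SucE (Var 0)) (EqE (DropE (Var 1) (Var 0)) (Cst 0))) [l]"

lemma wf_pexp_codes [simp]: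
  "wf_pexp n (FstDecodeE a) \<longleftrightarrow> wf_pexp n a"
  "wf_pexp n (SndDecodeE a) \<longleftrightarrow> wf_pexp n a"
  "wf_pexp n (DropE l i) \<longleftrightarrow> wf_pexp n l \<and> wf_pexp n i"
  "wf_pexp n (NthE l i) \<longleftrightarrow> wf_pexp n l \<and> wf_pexp n i"
  "wf_pexp n (LengthE l) \<longleftrightarrow> wf_pexp n l"
  by (auto simp: FstDecodeE_def SndDecodeE_def DiagonalE_def TriangleE_def
      HdE_def TlE_def DropE_def NthE_def LengthE_def)

lemma list_decode_Suc:
  "list_decode (Suc c) = fst (prod_decode c) # list_decode (snd (prod_decode c))"
  by (simp add: split_beta)

lemma peval_DropE [simp]:
  "peval (DropE l i) xs = list_encode (drop (peval i xs) (list_decode (peval l xs)))"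
proof -
  have tl: "snd (prod_decode (c - 1)) = list_encode (tl (list_decode c))" for c
    by (cases c) (simp_all add: list_decode_Suc prod_decode_def prod_decode_aux.simps
        del: list_decode.simps(2))
  have "rec_nat c (\<lambda>_ acc. snd (prod_decode (acc - 1))) i = list_encode (drop i (list_decode c))"
    for c i
    by (induction i) (simp_all add: tl[simplified] drop_Suc tl_drop)
  then show ?thesis by (simp add: DropE_def TlE_def)
qed

lemma peval_NthE [simp]:
  "peval (NthE l i) xs = nth_default 0 (list_decode (peval l xs)) (peval i xs)"
proof -
  have hd: "fst (prod_decode (c - 1)) = nth_default 0 (list_decode c) 0" for c
    by (cases c) (simp_all add: list_decode_Suc prod_decode_def prod_decode_aux.simps
        del: list_decode.simps(2))
  show ?thesis
    by (simp add: NthE_def HdE_def hd[simplified] nth_default_def)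
qed

lemma length_le_list_encode: "length xs \<le> list_encode xs"
proof (induction xs)
  case (Cons x xs)
  then show ?case using le_prod_encode_2[of "list_encode xs" x] by simp
qed simp

lemma peval_LengthE [simp]: "peval (LengthE l) xs = length (list_decode (peval l xs))"
proof -
  let ?L = "list_decode (peval l xs)"
  have "list_encode ys = 0 \<longleftrightarrow> ys = []" for ys
    by (metis list_decode.simps(1) list_encode.simps(1) list_encode_inverse)
  moreover have "length ?L < Suc (peval l xs)"
    using length_le_list_encode[of ?L] by simp
  moreover have "(LEAST i. drop i ?L = []) = length ?L"
    by (rule Least_equality) auto
  ultimately show ?thesis
    by (auto simp: LengthE_def bounded_least_def)
qed

section \<open>Computability of the reduction\<close>

definition "PrefixE a b = App (AndE (LeE (LengthE (Var 0)) (LengthE (Var 1)))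
  (BallE (LengthE (Var 0)) (EqE (NthE (Var 1) (Var 0)) (NthE (Var 2) (Var 0))))) [a, b]"
definition "BoundedE a b = App (AndE (EqE (LengthE (Var 0)) (LengthE (Var 1)))
  (BallE (LengthE (Var 0)) (LeE (NthE (Var 1) (Var 0)) (NthE (Var 2) (Var 0))))) [a, b]"
definition "SortedE a = App (BallE (Minus (LengthE (Var 0)) (Cst 1))
  (LessE (NthE (Var 1) (Var 0)) (NthE (Var 1) (SucE (Var 0))))) [a]"
definition "CoversE v m u = App (AndE (LessE (Cst 0) (Var 0))
  (AndE (EqE (FstDecodeE (Minus (Var 0) (Cst 1))) (Var 1))
    (PrefixE (SndDecodeE (Minus (Var 0) (Cst 1))) (Var 2)))) [v, m, u]"

text \<open>The bounded quantifier over \<open>\<sigma>\<close> in \<^const>\<open>refutes\<close> becomes one over the codes up to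
  \<open>list_encode (drop (Suc i) s)\<close>, by \<open>list_encode_mono\<close>.\<close>

definition "RefutesE l t s = App (BexE (LengthE (Var 2))
  (BallE (SucE (DropE (Var 3) (SucE (Var 0))))
    (ImpE (BoundedE (Var 0) (DropE (Var 4) (SucE (Var 1))))
      (BexE (Var 3) (AndE (EqE (FstDecodeE (Var 0)) (Var 2))
        (CoversE (NthE (Var 3) (Var 0)) (NthE (Var 5) (Var 2)) (Var 1))))))) [l, t, s]"

lemma wf_pexp_reduction_parts [simp]:
  "wf_pexp n (PrefixE a b) \<longleftrightarrow> wf_pexp n a \<and> wf_pexp n b"
  "wf_pexp n (BoundedE a b) \<longleftrightarrow> wf_pexp n a \<and> wf_pexp n b"
  "wf_pexp n (SortedE a) \<longleftrightarrow> wf_pexp n a"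
  "wf_pexp n (CoversE v m u) \<longleftrightarrow> wf_pexp n v \<and> wf_pexp n m \<and> wf_pexp n u"
  "wf_pexp n (RefutesE l t s) \<longleftrightarrow> wf_pexp n l \<and> wf_pexp n t \<and> wf_pexp n s"
  by (auto simp: PrefixE_def BoundedE_def SortedE_def CoversE_def RefutesE_def)

lemma holds_PrefixE [simp]:
  "holds (PrefixE a b) xs \<longleftrightarrow> prefix (list_decode (peval a xs)) (list_decode (peval b xs))"
  by (auto simp: PrefixE_def prefix_iff_nth nth_default_def)

lemma holds_BoundedE [simp]:
  "holds (BoundedE a b) xs \<longleftrightarrow> list_all2 (\<le>) (list_decode (peval a xs)) (list_decode (peval b xs))"
  by (auto simp: BoundedE_def list_all2_conv_all_nth nth_default_def)

lemma holds_SortedE [simp]: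
  "holds (SortedE a) xs \<longleftrightarrow> sorted_wrt (<) (list_decode (peval a xs))"
  by (auto simp: SortedE_def sorted_wrt_iff_nth_Suc_transp less_diff_conv nth_default_def)

lemma holds_CoversE [simp]:
  "holds (CoversE v m u) xs \<longleftrightarrow> covers (peval v xs) (peval m xs) (list_decode (peval u xs))"
  by (auto simp: CoversE_def covers_def)

lemma prod_encode_mono: "a \<le> a' \<Longrightarrow> b \<le> b' \<Longrightarrow> prod_encode (a, b) \<le> prod_encode (a', b')"
  by (simp add: prod_encode_def triangle_def add_mono div_le_mono mult_le_mono)

lemma list_encode_mono: "list_all2 (\<le>) xs ys \<Longrightarrow> list_encode xs \<le> list_encode ys"
  by (induction rule: list_all2_induct) (simp_all add: prod_encode_mono)

lemma all_bounded_list_codes_iff: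
  "(\<forall>u<Suc (list_encode \<beta>). list_all2 (\<le>) (list_decode u) \<beta> \<longrightarrow> Q u) \<longleftrightarrow>
   (\<forall>\<sigma>. list_all2 (\<le>) \<sigma> \<beta> \<longrightarrow> Q (list_encode \<sigma>))"
  by (metis less_Suc_eq_le list_decode_inverse list_encode_inverse list_encode_mono)

lemma holds_RefutesE:
  "holds (RefutesE l t s) xs \<longleftrightarrow>
    (\<exists>i<length (list_decode (peval s xs)).
       refutes (nth_default 0 (list_decode (peval l xs))) (peval t xs) (list_decode (peval s xs)) i)"
proof -
  let ?L = "list_decode (peval l xs)" and ?s = "list_decode (peval s xs)"
  have "holds (RefutesE l t s) xs \<longleftrightarrow> (\<exists>i<length ?s.
      \<forall>u<Suc (list_encode (drop (Suc i) ?s)). list_all2 (\<le>) (list_decode u) (drop (Suc i) ?s) \<longrightarrow>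
        (\<exists>e<peval t xs. fst (prod_decode e) = i \<and>
           covers (nth_default 0 ?L e) (nth_default 0 ?s i) (list_decode u)))"
    by (simp add: RefutesE_def)
  moreover have "(\<forall>u<Suc (list_encode (drop (Suc i) ?s)).
      list_all2 (\<le>) (list_decode u) (drop (Suc i) ?s) \<longrightarrow>
        (\<exists>e<peval t xs. fst (prod_decode e) = i \<and>
           covers (nth_default 0 ?L e) (nth_default 0 ?s i) (list_decode u)))
    \<longleftrightarrow> refutes (nth_default 0 ?L) (peval t xs) ?s i" if "i < length ?s" for i
    using that
    by (simp only: all_bounded_list_codes_iff list_encode_inverse refutes_def nth_default_nth)
  ultimately show ?thesis
    by blast
qed

lemma computable_on_pexp:
  assumes "wf_pexp 2 e"
    and "\<And>p n. \<exists>k. peval e [pref p k, n] = Suc (Phi p n) \<and> (\<forall>j<k. peval e [pref p j, n] = 0)"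
  shows "computable_on D Phi"
proof -
  obtain M where M: "\<And>xs. length xs = 2 \<Longrightarrow> ev M xs (peval e xs)"
    using total_recursive_peval[OF assms(1)] by (auto simp: total_recursive_def)
  have "ev M [a, b] (peval e [a, b])" for a b
    by (rule M) simp
  then show ?thesis
    unfolding computable_on_def using assms(2) by metis
qed

lemma list_decode_pref [simp]: "list_decode (pref p k) = map p [0..<k]"
  by (simp add: pref_def)

definition "reduction_pexp = Cond (LessE (LengthE (Var 0)) (FstDecodeE (Var 1))) (Cst 0)
  (SucE (Cond (AndE (SortedE (SndDecodeE (Var 1))) (RefutesE (Var 0) (FstDecodeE (Var 1)) (SndDecodeE (Var 1))))
    (SucE (SndDecodeE (Var 1))) (Cst 0)))"

lemma refutes_nth_default_map:
  "refutes (nth_default 0 (map p [0..<t])) t s i \<longleftrightarrow> refutes p t s i"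
  by (auto simp: refutes_def nth_default_def)

lemma computable_reduction_name: "computable_on D reduction_name"
proof (rule computable_on_pexp)
  show "wf_pexp 2 reduction_pexp"
    by (simp add: reduction_pexp_def)
  fix p n
  let ?t = "fst (prod_decode n)"
  have "peval reduction_pexp [pref p ?t, n] = Suc (reduction_name p n)"
    by (simp add: reduction_pexp_def reduction_name_def holds_RefutesE refutes_nth_default_map Let_def)
  moreover have "peval reduction_pexp [pref p j, n] = 0" if "j < ?t" for j
    using that by (simp add: reduction_pexp_def)
  ultimately show "\<exists>k. peval reduction_pexp [pref p k, n] = Suc (reduction_name p n) \<and>
      (\<forall>j<k. peval reduction_pexp [pref p j, n] = 0)"
    by blast
qed

definition "identity_pexp = Cond (LessE (Var 1) (LengthE (Var 0))) (SucE (NthE (Var 0) (Var 1))) (Cst 0)"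

lemma computable_id: "computable_on D (\<lambda>f. f)"
proof (rule computable_on_pexp)
  show "wf_pexp 2 identity_pexp"
    by (simp add: identity_pexp_def)
  fix p :: "nat \<Rightarrow> nat" and n
  have "peval identity_pexp [pref p (Suc n), n] = Suc (p n)"
    by (simp add: identity_pexp_def nth_default_def del: upt_Suc)
  moreover have "peval identity_pexp [pref p j, n] = 0" if "j < Suc n" for j
    using that by (simp add: identity_pexp_def)
  ultimately show "\<exists>k. peval identity_pexp [pref p k, n] = Suc (p n) \<and>
      (\<forall>j<k. peval identity_pexp [pref p j, n] = 0)"
    by blast
qed

theorem mainTheorem6:
  shows "sW_le par_Ccof_dom par_Ccof_sol wFindHS_dom wFindHS_sol"
proof -
  have "realizes par_Ccof_dom par_Ccof_sol (\<lambda>p. G (reduction_name p))"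
    if "realizes wFindHS_dom wFindHS_sol G" for G
    using that reduction_name_mem_wFindHS_dom par_Ccof_sol_if_not_mem_open
    unfolding realizes_def wFindHS_sol_def HS_def by blast
  then show ?thesis
    unfolding sW_le_def
    by (intro exI[of _ reduction_name] exI[of _ "\<lambda>f. f"]) (simp add: computable_reduction_name computable_id)
qed

end
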